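(* Let $T$ be a tree of order at least $3$, let $T^*$ be the twin-free tree associated to $T$, and let $k\geq 1$ be an integer. Then $\gamma_{B_k}(T)=\gamma_{B_k}(T^* )$.
   Context: $d(u,v)$ denotes the distance in the graph. For a connected graph $G$ and an integer $k\ge 1$, a function $f\colon V(G)\to\{0,1,\dots,k\}$ is a dominating $k$-broadcast on $G$ if for every $u\in V(G)$ there is a vertex $v$ with $f(v)\geq 1$ and $d(u,v)\leq f(v)$. Its cost is $\omega(f)=\sum_{u\in V(G)}f(u)$, and $\gamma_{B_k}(G)$ is the minimum cost of a dominating $k$-broadcast on $G$. A leaf is a vertex of degree one, its unique neighbor is a support vertex, and leaves with the same support vertex are twin leaves. For a tree $T$ of order at least 3, the twin-free tree associated to $T$, denoted $T^*$, is the tree obtained from $T$ by deleting all but one of the leaves of every maximal set of pairwise twin leaves. *)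

theory Defs
  imports Main
begin

definition graph :: "'a set \<Rightarrow> ('a \<Rightarrow> 'a \<Rightarrow> bool) \<Rightarrow> bool" where
  "graph V E \<longleftrightarrow> finite V \<and> (\<forall>u v. E u v \<longrightarrow> u \<in> V \<and> v \<in> V \<and> u \<noteq> v \<and> E v u)"

definition walk :: "'a set \<Rightarrow> ('a \<Rightarrow> 'a \<Rightarrow> bool) \<Rightarrow> 'a list \<Rightarrow> bool" where
  "walk V E xs \<longleftrightarrow> xs \<noteq> [] \<and> set xs \<subseteq> V \<and> (\<forall>i. Suc i < length xs \<longrightarrow> E (xs ! i) (xs ! Suc i))"

definition gconnected :: "'a set \<Rightarrow> ('a \<Rightarrow> 'a \<Rightarrow> bool) \<Rightarrow> bool" where
  "gconnected V E \<longleftrightarrow> V \<noteq> {} \<and>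
     (\<forall>u\<in>V. \<forall>v\<in>V. \<exists>xs. walk V E xs \<and> hd xs = u \<and> last xs = v)"

definition edges :: "'a set \<Rightarrow> ('a \<Rightarrow> 'a \<Rightarrow> bool) \<Rightarrow> 'a set set" where
  "edges V E = {{u, v} | u v. u \<in> V \<and> v \<in> V \<and> E u v}"

definition tree :: "'a set \<Rightarrow> ('a \<Rightarrow> 'a \<Rightarrow> bool) \<Rightarrow> bool" where
  "tree V E \<longleftrightarrow> graph V E \<and> gconnected V E \<and> card (edges V E) = card V - 1"

definition gdist :: "'a set \<Rightarrow> ('a \<Rightarrow> 'a \<Rightarrow> bool) \<Rightarrow> 'a \<Rightarrow> 'a \<Rightarrow> nat" where
  "gdist V E u v = (LEAST n. \<exists>xs. walk V E xs \<and> hd xs = u \<and> last xs = v \<and> length xs = Suc n)"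

definition degree :: "'a set \<Rightarrow> ('a \<Rightarrow> 'a \<Rightarrow> bool) \<Rightarrow> 'a \<Rightarrow> nat" where
  "degree V E u = card {v \<in> V. E u v}"

definition leaf :: "'a set \<Rightarrow> ('a \<Rightarrow> 'a \<Rightarrow> bool) \<Rightarrow> 'a \<Rightarrow> bool" where
  "leaf V E u \<longleftrightarrow> u \<in> V \<and> degree V E u = 1"

definition support_vertex :: "'a set \<Rightarrow> ('a \<Rightarrow> 'a \<Rightarrow> bool) \<Rightarrow> 'a \<Rightarrow> bool" where
  "support_vertex V E s \<longleftrightarrow> s \<in> V \<and> (\<exists>l. leaf V E l \<and> E l s)"

definition induced :: "('a \<Rightarrow> 'a \<Rightarrow> bool) \<Rightarrow> 'a set \<Rightarrow> 'a \<Rightarrow> 'a \<Rightarrow> bool" where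
  "induced E W = (\<lambda>u v. E u v \<and> u \<in> W \<and> v \<in> W)"

text \<open>W is the vertex set of a twin-free tree associated to (V,E): all non-leaves are kept,
  and among the leaves of each support vertex (a maximal set of twin leaves) exactly one is kept.
  The resulting tree T* = (W, induced E W) is unique up to isomorphism.\<close>
definition twin_free_vertices :: "'a set \<Rightarrow> ('a \<Rightarrow> 'a \<Rightarrow> bool) \<Rightarrow> 'a set \<Rightarrow> bool" where
  "twin_free_vertices V E W \<longleftrightarrow> W \<subseteq> V \<and>
     (\<forall>v\<in>V. \<not> leaf V E v \<longrightarrow> v \<in> W) \<and>
     (\<forall>s. support_vertex V E s \<longrightarrow> (\<exists>!l. l \<in> W \<and> leaf V E l \<and> E l s))"

definition dominating_k_broadcast ::
  "'a set \<Rightarrow> ('a \<Rightarrow> 'a \<Rightarrow> bool) \<Rightarrow> nat \<Rightarrow> ('a \<Rightarrow> nat) \<Rightarrow> bool" where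
  "dominating_k_broadcast V E k f \<longleftrightarrow>
     (\<forall>v\<in>V. f v \<le> k) \<and>
     (\<forall>u\<in>V. \<exists>v\<in>V. f v \<ge> 1 \<and> gdist V E u v \<le> f v)"

definition broadcast_cost :: "'a set \<Rightarrow> ('a \<Rightarrow> nat) \<Rightarrow> nat" where
  "broadcast_cost V f = (\<Sum>u\<in>V. f u)"

definition gamma_Bk :: "'a set \<Rightarrow> ('a \<Rightarrow> 'a \<Rightarrow> bool) \<Rightarrow> nat \<Rightarrow> nat" where
  "gamma_Bk V E k = (LEAST c. \<exists>f. dominating_k_broadcast V E k f \<and> broadcast_cost V f = c)"

end

theory Submission imports Defs begin

text \<open>A dominating broadcast can be moved off the leaves: a leaf broadcasting with strength
  \<open>f l \<ge> 1\<close> is replaced by its support vertex broadcasting with the same strength, which reaches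
  every vertex the leaf reached. Summing the strengths of the leaves of each support vertex into it
  (capped at \<open>k\<close>) gives a broadcast of no larger cost that lives on non-leaves and still dominates,
  even when the leaves themselves are only covered through a twin. Since all non-leaves of \<open>T\<close> are
  in \<open>T\<^sup>*\<close> and shortest walks never pass through a leaf, distances between vertices of \<open>T\<^sup>*\<close> agree in
  \<open>T\<close> and \<open>T\<^sup>*\<close>, so such broadcasts transfer between the two trees in both directions.\<close>

lemma walk_single [simp]: "walk V E [x] \<longleftrightarrow> x \<in> V"
  by (auto simp: walk_def)

lemma walk_Cons_Cons [simp]:
  "walk V E (x # y # ys) \<longleftrightarrow> x \<in> V \<and> E x y \<and> walk V E (y # ys)"
proof
  assume w: "walk V E (x # y # ys)"
  have "E ((y # ys) ! i) ((y # ys) ! Suc i)" if "Suc i < length (y # ys)" for i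
    using w that unfolding walk_def by (metis Suc_less_eq length_Cons nth_Cons_Suc)
  then show "x \<in> V \<and> E x y \<and> walk V E (y # ys)"
    using w unfolding walk_def by force
next
  assume a: "x \<in> V \<and> E x y \<and> walk V E (y # ys)"
  have "E ((x # y # ys) ! i) ((x # y # ys) ! Suc i)" if "Suc i < length (x # y # ys)" for i
    using a that unfolding walk_def by (cases i) simp_all
  then show "walk V E (x # y # ys)"
    using a unfolding walk_def by auto
qed

lemma walk_nonempty: "walk V E xs \<Longrightarrow> xs \<noteq> []"
  by (simp add: walk_def)

lemma walk_append:
  "walk V E xs \<Longrightarrow> walk V E ys \<Longrightarrow> last xs = hd ys \<Longrightarrow> walk V E (xs @ tl ys)"
proof (induction xs rule: induct_list012)
  case 1
  then show ?case by (simp add: walk_def)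
next
  case (2 x)
  then show ?case by (cases ys) (auto simp: walk_def)
next
  case (3 x y zs)
  then show ?case by auto
qed

lemma walk_snoc: "walk V E xs \<Longrightarrow> x \<in> V \<Longrightarrow> E (last xs) x \<Longrightarrow> walk V E (xs @ [x])"
  by (induction xs rule: induct_list012) auto

lemma walk_rev: "graph V E \<Longrightarrow> walk V E xs \<Longrightarrow> walk V E (rev xs)"
proof (induction xs rule: induct_list012)
  case (3 x y ys)
  then show ?case
    using walk_snoc[of V E "rev (y # ys)" x] by (auto simp: graph_def)
qed auto

lemma walk_subset_of_closed:
  "walk V E xs \<Longrightarrow> hd xs \<in> S \<Longrightarrow> (\<forall>x\<in>S. \<forall>y. E x y \<longrightarrow> y \<in> S) \<Longrightarrow> set xs \<subseteq> S"
  by (induction xs rule: induct_list012) auto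

lemma walk_induced_imp_walk: "walk W (induced E W) xs \<Longrightarrow> W \<subseteq> V \<Longrightarrow> walk V E xs"
  by (auto simp: walk_def induced_def)

definition walk_between :: "'a set \<Rightarrow> ('a \<Rightarrow> 'a \<Rightarrow> bool) \<Rightarrow> 'a \<Rightarrow> 'a \<Rightarrow> nat \<Rightarrow> bool" where
  "walk_between V E u v n \<longleftrightarrow> (\<exists>xs. walk V E xs \<and> hd xs = u \<and> last xs = v \<and> length xs = Suc n)"

lemma gdist_eq_Least_walk_between: "gdist V E u v = (LEAST n. walk_between V E u v n)"
  by (simp add: gdist_def walk_between_def)

lemma gdist_le_walk_between: "walk_between V E u v n \<Longrightarrow> gdist V E u v \<le> n"
  unfolding gdist_eq_Least_walk_between by (rule Least_le)

lemma walk_between_gdist: "walk_between V E u v n \<Longrightarrow> walk_between V E u v (gdist V E u v)"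
  unfolding gdist_eq_Least_walk_between by (rule LeastI)

lemma walk_between_trans:
  assumes "walk_between V E u v m" "walk_between V E v w n"
  shows "walk_between V E u w (m + n)"
proof -
  obtain xs ys where x: "walk V E xs" "hd xs = u" "last xs = v" "length xs = Suc m"
    and y: "walk V E ys" "hd ys = v" "last ys = w" "length ys = Suc n"
    using assms unfolding walk_between_def by blast
  have "walk V E (xs @ tl ys)"
    using walk_append x y by metis
  moreover have "last (xs @ tl ys) = w"
    using x y walk_nonempty by (cases ys; cases "tl ys") auto
  ultimately show ?thesis
    unfolding walk_between_def using x y walk_nonempty[OF x(1)]
    by (intro exI[of _ "xs @ tl ys"]) auto
qed

lemma walk_between_sym: "graph V E \<Longrightarrow> walk_between V E u v n \<longleftrightarrow> walk_between V E v u n"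
  unfolding walk_between_def by (metis last_rev length_rev rev_rev_ident walk_rev)

lemma gdist_sym: "graph V E \<Longrightarrow> gdist V E u v = gdist V E v u"
proof -
  assume "graph V E"
  then have "walk_between V E u v = walk_between V E v u"
    by (intro ext) (rule walk_between_sym)
  then show ?thesis
    unfolding gdist_eq_Least_walk_between by simp
qed

lemma gdist_refl: "u \<in> V \<Longrightarrow> gdist V E u u = 0"
proof -
  assume "u \<in> V"
  then have "walk_between V E u u 0"
    unfolding walk_between_def by (intro exI[of _ "[u]"]) simp
  then show ?thesis
    using gdist_le_walk_between by fastforce
qed

lemma gdist_edge: "graph V E \<Longrightarrow> E u v \<Longrightarrow> gdist V E u v \<le> 1"
proof -
  assume "graph V E" "E u v"
  then have "walk_between V E u v 1"
    unfolding walk_between_def graph_def by (intro exI[of _ "[u, v]"]) auto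
  then show ?thesis by (rule gdist_le_walk_between)
qed

locale connected_graph =
  fixes V :: "'a set" and E :: "'a \<Rightarrow> 'a \<Rightarrow> bool"
  assumes graph: "graph V E" and connected: "gconnected V E"
begin

lemma finite_vertices: "finite V"
  using graph by (simp add: graph_def)

lemma edge_vertices: "E u v \<Longrightarrow> u \<in> V \<and> v \<in> V"
  using graph by (auto simp: graph_def)

lemma edge_sym: "E u v \<Longrightarrow> E v u"
  using graph by (auto simp: graph_def)

lemma walk_between_exists: "u \<in> V \<Longrightarrow> v \<in> V \<Longrightarrow> walk_between V E u v (gdist V E u v)"
  using connected unfolding gconnected_def walk_between_def
  by (metis walk_between_def walk_between_gdist length_greater_0_conv gr0_conv_Suc walk_nonempty)

lemma gdist_triangle:
  "u \<in> V \<Longrightarrow> v \<in> V \<Longrightarrow> w \<in> V \<Longrightarrow> gdist V E u w \<le> gdist V E u v + gdist V E v w"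
  by (metis walk_between_exists walk_between_trans gdist_le_walk_between)

lemma leaf_neighbour_unique: "leaf V E l \<Longrightarrow> E l a \<Longrightarrow> E l b \<Longrightarrow> a = b"
  unfolding leaf_def degree_def using edge_vertices
  by (metis (mono_tags, lifting) card_1_singletonE mem_Collect_eq singletonD)

lemma leaf_has_neighbour: "leaf V E l \<Longrightarrow> \<exists>s. E l s"
  unfolding leaf_def degree_def by (metis (no_types, lifting) card_1_singletonE mem_Collect_eq singletonI)

lemma gdist_from_leaf:
  assumes l: "leaf V E l" and s: "E l s" and x: "x \<in> V" "x \<noteq> l"
  shows "gdist V E l x = Suc (gdist V E s x)"
proof -
  have "gdist V E l x \<le> gdist V E l s + gdist V E s x"
    using gdist_triangle edge_vertices[OF s] x by blast
  then have le: "gdist V E l x \<le> Suc (gdist V E s x)"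
    using gdist_edge[OF graph s] by simp
  obtain xs where xs: "walk V E xs" "hd xs = l" "last xs = x" "length xs = Suc (gdist V E l x)"
    using walk_between_exists edge_vertices[OF s] x unfolding walk_between_def by blast
  then obtain y ys where xs_eq: "xs = l # y # ys"
    using x(2) walk_nonempty by (cases xs rule: remdups_adj.cases) auto
  have "E l y" "walk V E (y # ys)"
    using xs(1) xs_eq by auto
  with leaf_neighbour_unique[OF l _ s] have "walk_between V E s x (length ys)"
    unfolding walk_between_def using xs(3) xs_eq by (intro exI[of _ "y # ys"]) auto
  then show ?thesis
    using gdist_le_walk_between le xs(4) xs_eq by fastforce
qed

lemma gdist_to_support_le:
  assumes "leaf V E l" "E l s" "x \<in> V"
  shows "gdist V E x s \<le> max 1 (gdist V E x l)"
proof (cases "x = l")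
  case True
  then show ?thesis using gdist_edge[OF graph assms(2)] by simp
next
  case False
  then have "gdist V E x l = Suc (gdist V E x s)"
    using gdist_from_leaf[OF assms] gdist_sym[OF graph] by metis
  then show ?thesis by simp
qed

lemma gdist_le_from_twin_leaf:
  assumes "E u s" "leaf V E l" "E l s" "x \<in> V" "x \<noteq> l"
  shows "gdist V E u x \<le> gdist V E l x"
proof -
  have "gdist V E u x \<le> gdist V E u s + gdist V E s x"
    using gdist_triangle edge_vertices assms by blast
  also have "\<dots> \<le> Suc (gdist V E s x)"
    using gdist_edge[OF graph assms(1)] by simp
  also have "\<dots> = gdist V E l x"
    using gdist_from_leaf assms(2-5) by simp
  finally show ?thesis .
qed

lemma support_not_leaf:
  assumes V3: "card V \<ge> 3" and l: "leaf V E l" and s: "E l s"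
  shows "\<not> leaf V E s"
proof
  assume ls: "leaf V E s"
  have closed: "\<forall>x\<in>{l, s}. \<forall>y. E x y \<longrightarrow> y \<in> {l, s}"
    using leaf_neighbour_unique[OF l _ s] leaf_neighbour_unique[OF ls _ edge_sym[OF s]] by blast
  have "V \<subseteq> {l, s}"
  proof
    fix x assume "x \<in> V"
    then obtain xs where "walk V E xs" "hd xs = l" "last xs = x"
      using connected edge_vertices[OF s] unfolding gconnected_def by blast
    then show "x \<in> {l, s}"
      using walk_subset_of_closed[OF _ _ closed] last_in_set walk_nonempty by blast
  qed
  moreover have "card {l, s} \<le> 2"
    by (simp add: card_insert_if)
  ultimately have "card V \<le> 2"
    using card_mono[of "{l, s}" V] by simp
  with V3 show False by simp
qed

section \<open>Distances in the subgraph induced by a superset of the non-leaves\<close>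

context
  fixes W :: "'a set"
  assumes W_subset: "W \<subseteq> V" and nonleaves_in_W: "\<forall>v\<in>V. \<not> leaf V E v \<longrightarrow> v \<in> W"
begin

text \<open>A walk entering a leaf outside \<open>W\<close> must come straight back, and that detour can be cut out.\<close>
lemma walk_shortcut_into_induced:
  "walk V E xs \<Longrightarrow> hd xs \<in> W \<Longrightarrow> last xs \<in> W \<Longrightarrow>
    \<exists>ys. walk W (induced E W) ys \<and> hd ys = hd xs \<and> last ys = last xs \<and> length ys \<le> length xs"
proof (induction "length xs" arbitrary: xs rule: less_induct)
  case less
  show ?case
  proof (cases xs rule: remdups_adj.cases)
    case 1
    then show ?thesis using walk_nonempty less.prems(1) by blast
  next
    case (2 x)
    then show ?thesis using less.prems by (intro exI[of _ "[x]"]) simp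
  next
    case (3 x y r)
    have xy: "E x y" "walk V E (y # r)" and xW: "x \<in> W"
      using less.prems 3 by simp_all
    show ?thesis
    proof (cases "y \<in> W")
      case True
      obtain ys where ys: "walk W (induced E W) ys" "hd ys = y" "last ys = last xs"
        "length ys \<le> length (y # r)"
        using less.hyps[of "y # r"] less.prems 3 True xy(2) by auto
      then obtain t where "ys = y # t"
        using walk_nonempty by (cases ys) auto
      then show ?thesis
        using ys 3 xW True xy(1) by (intro exI[of _ "x # ys"]) (auto simp: induced_def)
    next
      case False
      then have ly: "leaf V E y"
        using nonleaves_in_W xy(2) by (auto simp: walk_def)
      obtain z r' where r: "r = z # r'"
        using False less.prems(3) 3 by (cases r) auto
      have "z = x"
        using leaf_neighbour_unique[OF ly] edge_sym[OF xy(1)] xy(2) r by simp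
      then have "walk V E (x # r')" "last (x # r') = last xs"
        using xy(2) r 3 by simp_all
      then show ?thesis
        using less.hyps[of "x # r'"] less.prems(3) 3 r xW by fastforce
    qed
  qed
qed

lemma gdist_induced_eq:
  assumes u: "u \<in> W" and v: "v \<in> W"
  shows "gdist W (induced E W) u v = gdist V E u v"
proof -
  obtain xs where xs: "walk V E xs" "hd xs = u" "last xs = v" "length xs = Suc (gdist V E u v)"
    using walk_between_exists u v W_subset unfolding walk_between_def by blast
  then obtain ys where ys: "walk W (induced E W) ys" "hd ys = u" "last ys = v"
    "length ys \<le> length xs"
    using walk_shortcut_into_induced u v by metis
  then have W_walk: "walk_between W (induced E W) u v (length ys - 1)"
    unfolding walk_between_def using walk_nonempty by fastforce
  then have "gdist W (induced E W) u v \<le> gdist V E u v"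
    using gdist_le_walk_between ys(4) xs(4) by fastforce
  moreover have "walk_between V E u v (gdist W (induced E W) u v)"
    using walk_between_gdist[OF W_walk] walk_induced_imp_walk[OF _ W_subset]
    unfolding walk_between_def by blast
  then have "gdist V E u v \<le> gdist W (induced E W) u v"
    by (rule gdist_le_walk_between)
  ultimately show ?thesis by simp
qed

end

section \<open>Moving a broadcast onto the non-leaves\<close>

definition push_to_supports :: "nat \<Rightarrow> 'a set \<Rightarrow> ('a \<Rightarrow> nat) \<Rightarrow> 'a \<Rightarrow> nat" where
  "push_to_supports k A f v =
     (if v \<in> A \<and> \<not> leaf V E v then min k (f v + (\<Sum>l | l \<in> A \<and> leaf V E l \<and> E l v. f l)) else 0)"

lemma push_to_supports_cost:
  assumes "A \<subseteq> V"
  shows "sum (push_to_supports k A f) A \<le> sum f A"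
proof -
  let ?p = "push_to_supports k A f"
  define N where "N = {v \<in> A. \<not> leaf V E v}"
  define L where "L = {l \<in> A. leaf V E l}"
  have "finite A"
    using assms finite_vertices by (rule finite_subset)
  then have fin: "finite N" "finite L"
    unfolding N_def L_def by simp_all
  have A_split: "A = N \<union> L" "N \<inter> L = {}"
    unfolding N_def L_def by auto
  have "sum ?p A = sum ?p N"
    by (rule sum.mono_neutral_right) (auto simp: \<open>finite A\<close> N_def push_to_supports_def)
  also have "\<dots> \<le> (\<Sum>v\<in>N. f v + (\<Sum>l | l \<in> L \<and> E l v. f l))"
    by (rule sum_mono) (simp add: push_to_supports_def N_def L_def)
  also have "\<dots> = sum f N + (\<Sum>l\<in>L. \<Sum>v | v \<in> N \<and> E l v. f l)"
    using sum.swap_restrict[OF fin, of "\<lambda>v l. f l" "\<lambda>v l. E l v"] by (simp add: sum.distrib)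
  also have "(\<Sum>l\<in>L. \<Sum>v | v \<in> N \<and> E l v. f l) \<le> sum f L"
  proof (rule sum_mono)
    fix l assume "l \<in> L"
    then have "\<forall>a\<in>{v \<in> N. E l v}. \<forall>b\<in>{v \<in> N. E l v}. a = b"
      using leaf_neighbour_unique unfolding L_def by blast
    then have "card {v. v \<in> N \<and> E l v} \<le> 1"
      using card_le_Suc0_iff_eq[of "{v \<in> N. E l v}"] fin(1) by simp
    then show "(\<Sum>v | v \<in> N \<and> E l v. f l) \<le> f l"
      by simp
  qed
  also have "sum f N + sum f L = sum f A"
    using sum.union_disjoint[OF fin A_split(2), of f] A_split(1) by argo
  finally show ?thesis by simp
qed

lemma cover_moves_to_nonleaf:
  assumes V3: "card V \<ge> 3" and "A \<subseteq> V"
    and ge_at_nonleaves: "\<forall>v\<in>A. \<not> leaf V E v \<longrightarrow> f v \<le> h v"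
    and ge_at_supports: "\<forall>l s. l \<in> A \<longrightarrow> leaf V E l \<longrightarrow> E l s \<longrightarrow> f l \<le> h s"
    and v: "v \<in> A" "1 \<le> f v" "gdist V E u v \<le> f v" and u: "u \<in> V"
  shows "\<exists>w\<in>V. \<not> leaf V E w \<and> 1 \<le> h w \<and> gdist V E u w \<le> h w"
proof (cases "leaf V E v")
  case False
  then show ?thesis
    using ge_at_nonleaves v \<open>A \<subseteq> V\<close> by (intro bexI[of _ v]) auto
next
  case True
  obtain s where s: "E v s"
    using leaf_has_neighbour[OF True] by blast
  have "gdist V E u s \<le> max 1 (gdist V E u v)"
    using gdist_to_support_le[OF True s u] .
  moreover have "f v \<le> h s"
    using ge_at_supports v(1) True s by blast
  ultimately show ?thesis
    using support_not_leaf[OF V3 True s] v(2,3) edge_vertices[OF s]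
    by (intro bexI[of _ s]) auto
qed

lemma push_to_supports_dominating:
  assumes V3: "card V \<ge> 3" and A: "A \<subseteq> V" "\<forall>v\<in>V. \<not> leaf V E v \<longrightarrow> v \<in> A"
    and twins: "\<forall>l s. leaf V E l \<longrightarrow> E l s \<longrightarrow> (\<exists>l'\<in>A. leaf V E l' \<and> E l' s)"
    and f_le: "\<forall>v\<in>A. f v \<le> k"
    and covers: "\<forall>u\<in>A. \<exists>v\<in>A. 1 \<le> f v \<and> gdist V E u v \<le> f v"
  shows "dominating_k_broadcast V E k (push_to_supports k A f)"
proof -
  let ?h = "push_to_supports k A f"
  have ge_at_nonleaves: "\<forall>v\<in>A. \<not> leaf V E v \<longrightarrow> f v \<le> ?h v"
    using f_le by (auto simp: push_to_supports_def)
  have ge_at_supports: "\<forall>l s. l \<in> A \<longrightarrow> leaf V E l \<longrightarrow> E l s \<longrightarrow> f l \<le> ?h s"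
  proof (intro allI impI)
    fix l s assume l: "l \<in> A" "leaf V E l" and s: "E l s"
    have "\<not> leaf V E s" "s \<in> A"
      using support_not_leaf[OF V3 l(2) s] A(2) edge_vertices[OF s] by auto
    moreover have "f l \<le> (\<Sum>l' | l' \<in> A \<and> leaf V E l' \<and> E l' s. f l')"
      using l s finite_subset[OF A(1) finite_vertices] by (intro member_le_sum) auto
    ultimately show "f l \<le> ?h s"
      using f_le l by (auto simp: push_to_supports_def)
  qed
  have "\<exists>w\<in>V. 1 \<le> ?h w \<and> gdist V E u w \<le> ?h w" if u: "u \<in> V" for u
  proof -
    text \<open>It suffices to cover \<open>u\<close> itself, or, if \<open>u\<close> is a leaf, a twin of \<open>u\<close> in \<open>A\<close>.\<close>
    obtain a where a: "a \<in> A" "\<forall>x\<in>V. \<not> leaf V E x \<longrightarrow> gdist V E u x \<le> gdist V E a x"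
    proof (cases "leaf V E u")
      case True
      obtain s where "E u s" using leaf_has_neighbour[OF True] by blast
      with twins True obtain l where "l \<in> A" "leaf V E l" "E l s" by blast
      then show ?thesis
        using that gdist_le_from_twin_leaf[OF \<open>E u s\<close>] by blast
    qed (use u A(2) that in blast)
    then obtain v where "v \<in> A" "1 \<le> f v" "gdist V E a v \<le> f v"
      using covers by blast
    then obtain w where "w \<in> V" "\<not> leaf V E w" "1 \<le> ?h w" "gdist V E a w \<le> ?h w"
      using cover_moves_to_nonleaf[OF V3 A(1) ge_at_nonleaves ge_at_supports] a A(1) by blast
    then show ?thesis
      using a(2) by (meson le_trans)
  qed
  moreover have "\<forall>v\<in>V. ?h v \<le> k"
    by (simp add: push_to_supports_def)
  ultimately show ?thesis
    unfolding dominating_k_broadcast_def by blast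
qed

end

lemma gamma_Bk_le: "dominating_k_broadcast V E k f \<Longrightarrow> gamma_Bk V E k \<le> broadcast_cost V f"
proof -
  assume "dominating_k_broadcast V E k f"
  then have "\<exists>g. dominating_k_broadcast V E k g \<and> broadcast_cost V g = broadcast_cost V f"
    by blast
  then show ?thesis
    unfolding gamma_Bk_def by (rule Least_le)
qed

lemma gamma_Bk_attained:
  assumes "1 \<le> k"
  shows "\<exists>f. dominating_k_broadcast V E k f \<and> broadcast_cost V f = gamma_Bk V E k"
proof -
  have "\<exists>v\<in>V. 1 \<le> (1::nat) \<and> gdist V E u v \<le> 1" if "u \<in> V" for u
    using that gdist_refl[OF that] by (intro bexI[of _ u]) simp_all
  then have "dominating_k_broadcast V E k (\<lambda>_. 1)"
    using assms unfolding dominating_k_broadcast_def by simp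
  then have "\<exists>c f. dominating_k_broadcast V E k f \<and> broadcast_cost V f = c"
    by blast
  then show ?thesis
    unfolding gamma_Bk_def by (rule LeastI_ex)
qed

context connected_graph
begin

context
  fixes W :: "'a set" and k :: nat
  assumes V3: "card V \<ge> 3" and twin_free: "twin_free_vertices V E W" and k: "1 \<le> k"
begin

lemma W_subset: "W \<subseteq> V" and nonleaves_in_W: "\<forall>v\<in>V. \<not> leaf V E v \<longrightarrow> v \<in> W"
  using twin_free by (auto simp: twin_free_vertices_def)

lemma twin_in_W: "leaf V E l \<Longrightarrow> E l s \<Longrightarrow> \<exists>l'\<in>W. leaf V E l' \<and> E l' s"
  using twin_free edge_vertices unfolding twin_free_vertices_def support_vertex_def by blast

lemma gamma_Bk_twin_free_le: "gamma_Bk W (induced E W) k \<le> gamma_Bk V E k"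
proof -
  obtain f where f: "dominating_k_broadcast V E k f" "broadcast_cost V f = gamma_Bk V E k"
    using gamma_Bk_attained[OF k] by blast
  let ?h = "push_to_supports k V f"
  have h: "dominating_k_broadcast V E k ?h"
    using f(1) V3 edge_vertices
    by (intro push_to_supports_dominating) (auto simp: dominating_k_broadcast_def)
  have h_in_W: "?h v \<noteq> 0 \<Longrightarrow> v \<in> W" for v
    using nonleaves_in_W by (auto simp: push_to_supports_def split: if_splits)
  have "dominating_k_broadcast W (induced E W) k ?h"
    using h h_in_W W_subset gdist_induced_eq[OF W_subset nonleaves_in_W]
    unfolding dominating_k_broadcast_def by (metis not_one_le_zero subsetD)
  then have "gamma_Bk W (induced E W) k \<le> sum ?h W"
    using gamma_Bk_le broadcast_cost_def by metis
  also have "\<dots> = sum ?h V"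
    using h_in_W W_subset finite_vertices by (intro sum.mono_neutral_left) auto
  also have "\<dots> \<le> gamma_Bk V E k"
    using push_to_supports_cost[OF order_refl, of k f] f(2) by (simp add: broadcast_cost_def)
  finally show ?thesis .
qed

lemma gamma_Bk_le_twin_free: "gamma_Bk V E k \<le> gamma_Bk W (induced E W) k"
proof -
  obtain f where f: "dominating_k_broadcast W (induced E W) k f"
      "broadcast_cost W f = gamma_Bk W (induced E W) k"
    using gamma_Bk_attained[OF k] by blast
  let ?h = "push_to_supports k W f"
  have "\<forall>u\<in>W. \<exists>v\<in>W. 1 \<le> f v \<and> gdist V E u v \<le> f v"
    using f(1) gdist_induced_eq[OF W_subset nonleaves_in_W]
    unfolding dominating_k_broadcast_def by metis
  then have "dominating_k_broadcast V E k ?h"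
    using f(1) V3 W_subset nonleaves_in_W twin_in_W
    by (intro push_to_supports_dominating) (auto simp: dominating_k_broadcast_def)
  then have "gamma_Bk V E k \<le> sum ?h V"
    using gamma_Bk_le broadcast_cost_def by metis
  also have "\<dots> = sum ?h W"
    using W_subset finite_vertices by (intro sum.mono_neutral_right) (auto simp: push_to_supports_def)
  also have "\<dots> \<le> gamma_Bk W (induced E W) k"
    using push_to_supports_cost[OF W_subset, of k f] f(2) by (simp add: broadcast_cost_def)
  finally show ?thesis .
qed

end

end

theorem proposition2:
  fixes V W :: "'a set" and E :: "'a \<Rightarrow> 'a \<Rightarrow> bool" and k :: nat
  assumes "tree V E" and "card V \<ge> 3"
    and "twin_free_vertices V E W"
    and "k \<ge> 1"
  shows "gamma_Bk V E k = gamma_Bk W (induced E W) k"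
proof -
  interpret connected_graph V E
    using assms(1) by unfold_locales (simp_all add: tree_def)
  show ?thesis
    using gamma_Bk_twin_free_le gamma_Bk_le_twin_free assms(2-4) by (simp add: antisym)
qed

end
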